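(* Let $B$ be a finite simplicial complex. Any consistent collection of small symmetric necklaces (with morphisms) over the simplices of the $3$-skeleton of $B$ extends uniquely to a consistent collection of small symmetric necklaces over all simplices of $B$. Equivalently, for every simplex $\Delta$ of dimension at least $4$, a consistent collection of necklaces over all proper faces of $\Delta$ is the collection of restrictions of a unique necklace over $\Delta$.
   Context: A necklace over a simplex $\sigma$ is a cyclic word whose beads are colored by the vertices of $\sigma$; for a face $\tau\subset\sigma$ the necklace of $\tau$ is obtained from that of $\sigma$ by deleting all beads whose colors are not vertices of $\tau$, which gives an injective color- and cyclic-order-preserving morphism; a collection of necklaces and morphisms is consistent if these morphisms compose correctly along chains of faces. A small symmetric necklace contains exactly two beads of each color and is invariant under rotation by half its length. *)

theory Defs
  imports Main
begin

definition simplicial_complex :: "'v set set \<Rightarrow> bool" where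
  "simplicial_complex B \<longleftrightarrow> finite B \<and> (\<forall>\<sigma>\<in>B. finite \<sigma> \<and> \<sigma> \<noteq> {}) \<and>
     (\<forall>\<sigma>\<in>B. \<forall>\<tau>. \<tau> \<subseteq> \<sigma> \<and> \<tau> \<noteq> {} \<longrightarrow> \<tau> \<in> B)"

text \<open>The k-skeleton: simplices of dimension at most k (at most k+1 vertices).\<close>
definition skeleton :: "nat \<Rightarrow> 'v set set \<Rightarrow> 'v set set" where
  "skeleton k B = {\<sigma> \<in> B. card \<sigma> \<le> k + 1}"

text \<open>A necklace is a cyclic word, represented by a list w; its beads are the positions
  0..<length w, bead i has colour w!i, and positions are cyclically ordered.\<close>
definition small_symmetric :: "'v set \<Rightarrow> 'v list \<Rightarrow> bool" where
  "small_symmetric V w \<longleftrightarrow> set w \<subseteq> V \<and>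
     (\<forall>v\<in>V. card {i. i < length w \<and> w ! i = v} = 2) \<and>
     rotate (length w div 2) w = w"

definition cyc :: "nat \<Rightarrow> nat \<Rightarrow> nat \<Rightarrow> bool" where
  "cyc a b c \<longleftrightarrow> (a < b \<and> b < c) \<or> (b < c \<and> c < a) \<or> (c < a \<and> a < b)"

text \<open>Morphism from the necklace u over the face \<tau> to the necklace w: an injective,
  colour-preserving, cyclic-order-preserving map of beads whose image is exactly the
  set of beads of w with colour in \<tau> (so u is obtained from w by deleting the beads of
  colour outside \<tau>).\<close>
definition necklace_morphism :: "'v set \<Rightarrow> 'v list \<Rightarrow> 'v list \<Rightarrow> (nat \<Rightarrow> nat) \<Rightarrow> bool" where
  "necklace_morphism \<tau> u w f \<longleftrightarrow>
     inj_on f {..<length u} \<and>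
     f ` {..<length u} = {j. j < length w \<and> w ! j \<in> \<tau>} \<and>
     (\<forall>i < length u. w ! (f i) = u ! i) \<and>
     (\<forall>i < length u. \<forall>j < length u. \<forall>k < length u. cyc i j k \<longrightarrow> cyc (f i) (f j) (f k))"

definition necklace_iso :: "'v list \<Rightarrow> 'v list \<Rightarrow> (nat \<Rightarrow> nat) \<Rightarrow> bool" where
  "necklace_iso u w f \<longleftrightarrow> necklace_morphism (set w) u w f"

definition consistent_collection ::
  "'v set set \<Rightarrow> ('v set \<Rightarrow> 'v list) \<Rightarrow> ('v set \<Rightarrow> 'v set \<Rightarrow> nat \<Rightarrow> nat) \<Rightarrow> bool" where
  "consistent_collection S N F \<longleftrightarrow>
     (\<forall>\<sigma>\<in>S. small_symmetric \<sigma> (N \<sigma>)) \<and>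
     (\<forall>\<sigma>\<in>S. \<forall>\<tau>\<in>S. \<tau> \<subset> \<sigma> \<longrightarrow> necklace_morphism \<tau> (N \<tau>) (N \<sigma>) (F \<tau> \<sigma>)) \<and>
     (\<forall>\<rho>\<in>S. \<forall>\<tau>\<in>S. \<forall>\<sigma>\<in>S. \<rho> \<subset> \<tau> \<and> \<tau> \<subset> \<sigma> \<longrightarrow>
        (\<forall>i < length (N \<rho>). F \<tau> \<sigma> (F \<rho> \<tau> i) = F \<rho> \<sigma> i))"

definition extends_collection ::
  "'v set set \<Rightarrow> ('v set \<Rightarrow> 'v list) \<Rightarrow> ('v set \<Rightarrow> 'v set \<Rightarrow> nat \<Rightarrow> nat) \<Rightarrow>
   ('v set \<Rightarrow> 'v list) \<Rightarrow> ('v set \<Rightarrow> 'v set \<Rightarrow> nat \<Rightarrow> nat) \<Rightarrow> bool" where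
  "extends_collection S N F N' F' \<longleftrightarrow>
     (\<forall>\<sigma>\<in>S. N' \<sigma> = N \<sigma>) \<and>
     (\<forall>\<sigma>\<in>S. \<forall>\<tau>\<in>S. \<tau> \<subset> \<sigma> \<longrightarrow> (\<forall>i < length (N \<tau>). F' \<tau> \<sigma> i = F \<tau> \<sigma> i))"

definition iso_rel ::
  "'v set set \<Rightarrow> 'v set set \<Rightarrow>
   ('v set \<Rightarrow> 'v list) \<Rightarrow> ('v set \<Rightarrow> 'v set \<Rightarrow> nat \<Rightarrow> nat) \<Rightarrow>
   ('v set \<Rightarrow> 'v list) \<Rightarrow> ('v set \<Rightarrow> 'v set \<Rightarrow> nat \<Rightarrow> nat) \<Rightarrow> bool" where
  "iso_rel S T N1 F1 N2 F2 \<longleftrightarrow>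
     (\<exists>\<phi> :: 'v set \<Rightarrow> nat \<Rightarrow> nat.
        (\<forall>\<sigma>\<in>T. necklace_iso (N1 \<sigma>) (N2 \<sigma>) (\<phi> \<sigma>)) \<and>
        (\<forall>\<sigma>\<in>S. \<forall>i < length (N1 \<sigma>). \<phi> \<sigma> i = i) \<and>
        (\<forall>\<sigma>\<in>T. \<forall>\<tau>\<in>T. \<tau> \<subset> \<sigma> \<longrightarrow>
           (\<forall>i < length (N1 \<tau>). \<phi> \<sigma> (F1 \<tau> \<sigma> i) = F2 \<tau> \<sigma> (\<phi> \<tau> i))))"

end

theory Submission
  imports Defs
begin

text \<open>Name the beads of the necklace over a simplex \<open>\<sigma>\<close> by pairs \<open>(v, e)\<close>, \<open>v \<in> \<sigma>\<close>, \<open>e < 2\<close>,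
  the images of the two beads over the vertex \<open>v\<close>. A necklace is then the same thing as a
  cyclic order on these names, and by consistency the order of three beads can be read off over
  the face spanned by their colours. Conversely a ternary relation on the names comes from a
  necklace iff it satisfies the axioms of a cyclic order, each of which involves at most four
  beads and hence lives on a face of dimension at most 3; the necklace is small symmetric iff the
  two beads of each colour separate the two beads of every other colour, a condition on edges.
  So the relation read off from the 3-skeleton is realised over every simplex, uniquely up to
  relabelling, and matching names gives the morphisms.\<close>

section \<open>Cyclic orders\<close>

locale cyclic_order =
  fixes X :: "'a set" and R :: "'a \<Rightarrow> 'a \<Rightarrow> 'a \<Rightarrow> bool"
  assumes rotate: "\<lbrakk>a \<in> X; b \<in> X; c \<in> X; R a b c\<rbrakk> \<Longrightarrow> R b c a"
    and asym: "\<lbrakk>a \<in> X; b \<in> X; c \<in> X; R a b c\<rbrakk> \<Longrightarrow> \<not> R a c b"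
    and total: "\<lbrakk>a \<in> X; b \<in> X; c \<in> X; a \<noteq> b; b \<noteq> c; a \<noteq> c\<rbrakk> \<Longrightarrow> R a b c \<or> R a c b"
    and trans: "\<lbrakk>a \<in> X; b \<in> X; c \<in> X; d \<in> X; R a b c; R a c d\<rbrakk> \<Longrightarrow> R a b d"
    and distinct: "\<lbrakk>a \<in> X; b \<in> X; c \<in> X; R a b c\<rbrakk> \<Longrightarrow> a \<noteq> b \<and> b \<noteq> c \<and> a \<noteq> c"

interpretation cyc: cyclic_order UNIV cyc
  by unfold_locales (auto simp: cyc_def)

lemmas cyc_rotate = cyc.rotate[OF UNIV_I UNIV_I UNIV_I]
  and cyc_asym = cyc.asym[OF UNIV_I UNIV_I UNIV_I]
  and cyc_total = cyc.total[OF UNIV_I UNIV_I UNIV_I]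
  and cyc_trans = cyc.trans[OF UNIV_I UNIV_I UNIV_I UNIV_I]
  and cyc_distinct = cyc.distinct[OF UNIV_I UNIV_I UNIV_I]

lemma cyc_iff_between: "a < c \<Longrightarrow> cyc a b c \<longleftrightarrow> a < b \<and> b < c"
  unfolding cyc_def by auto

lemma finite_linear_order_ranking:
  assumes fin: "finite X"
    and irrefl: "\<And>x. x \<in> X \<Longrightarrow> \<not> lt x x"
    and trans: "\<And>x y z. \<lbrakk>x \<in> X; y \<in> X; z \<in> X; lt x y; lt y z\<rbrakk> \<Longrightarrow> lt x z"
    and total: "\<And>x y. \<lbrakk>x \<in> X; y \<in> X; x \<noteq> y\<rbrakk> \<Longrightarrow> lt x y \<or> lt y x"
  obtains r where "bij_betw r X {..<card X}" "\<And>x y. \<lbrakk>x \<in> X; y \<in> X\<rbrakk> \<Longrightarrow> lt x y \<longleftrightarrow> r x < r y"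
proof -
  define r where "r x = card {y \<in> X. lt y x}" for x
  have mono: "r x < r y" if "x \<in> X" "y \<in> X" "lt x y" for x y
  proof -
    have "{z \<in> X. lt z x} \<subset> {z \<in> X. lt z y}"
      using that trans irrefl by blast
    thus ?thesis unfolding r_def using fin by (intro psubset_card_mono) auto
  qed
  have lt_iff: "lt x y \<longleftrightarrow> r x < r y" if "x \<in> X" "y \<in> X" for x y
    using mono[OF that] mono[OF that(2,1)] total[OF that] by force
  have inj: "inj_on r X"
    by (rule inj_onI) (metis total mono less_irrefl)
  have "r x < card X" if "x \<in> X" for x
  proof -
    have "r x \<le> card (X - {x})"
      unfolding r_def using fin irrefl by (intro card_mono) auto
    thus ?thesis using that fin card_Diff1_less by fastforce
  qed
  hence "r ` X = {..<card X}"
    by (intro card_subset_eq) (auto simp: card_image[OF inj])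
  with inj have "bij_betw r X {..<card X}" unfolding bij_betw_def by blast
  with lt_iff that show ?thesis by blast
qed

lemma (in cyclic_order) realises_if_increasing:
  assumes inj: "inj_on r X"
    and increasing: "\<And>a b c. \<lbrakk>a \<in> X; b \<in> X; c \<in> X; r a < r b; r b < r c\<rbrakk> \<Longrightarrow> R a b c"
    and X: "a \<in> X" "b \<in> X" "c \<in> X"
  shows "cyc (r a) (r b) (r c) \<longleftrightarrow> R a b c"
proof
  assume "cyc (r a) (r b) (r c)"
  then consider "r a < r b" "r b < r c" | "r b < r c" "r c < r a" | "r c < r a" "r a < r b"
    unfolding cyc_def by auto
  thus "R a b c"
  proof cases
    case 1 thus ?thesis using increasing X by blast
  next
    case 2
    hence "R b c a" using increasing X by blast
    thus ?thesis using rotate X by blast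
  next
    case 3
    hence "R c a b" using increasing X by blast
    thus ?thesis using rotate X by blast
  qed
next
  assume abc: "R a b c"
  have "\<not> R a c b" "\<not> R c b a" "\<not> R b a c" using asym rotate X abc by blast+
  hence "\<not> (r a < r c \<and> r c < r b)" "\<not> (r c < r b \<and> r b < r a)" "\<not> (r b < r a \<and> r a < r c)"
    using increasing X by blast+
  moreover have "r a \<noteq> r b" "r b \<noteq> r c" "r a \<noteq> r c"
    using distinct[OF X abc] inj X by (auto dest: inj_onD)
  ultimately show "cyc (r a) (r b) (r c)" unfolding cyc_def by linarith
qed

text \<open>The linear order obtained by cutting the cycle open at \<open>b\<^sub>0\<close>.\<close>
definition (in cyclic_order) cut :: "'a \<Rightarrow> 'a \<Rightarrow> 'a \<Rightarrow> bool" where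
  "cut b\<^sub>0 x y \<longleftrightarrow> (x = b\<^sub>0 \<and> y \<noteq> b\<^sub>0) \<or> (x \<noteq> b\<^sub>0 \<and> y \<noteq> b\<^sub>0 \<and> R b\<^sub>0 x y)"

lemma (in cyclic_order) cut_linear_order:
  assumes b\<^sub>0: "b\<^sub>0 \<in> X"
  shows "x \<in> X \<Longrightarrow> \<not> cut b\<^sub>0 x x"
    and "\<lbrakk>x \<in> X; y \<in> X; z \<in> X; cut b\<^sub>0 x y; cut b\<^sub>0 y z\<rbrakk> \<Longrightarrow> cut b\<^sub>0 x z"
    and "\<lbrakk>x \<in> X; y \<in> X; x \<noteq> y\<rbrakk> \<Longrightarrow> cut b\<^sub>0 x y \<or> cut b\<^sub>0 y x"
  using distinct[OF b\<^sub>0, of x x] trans[OF b\<^sub>0, of x y z] total[OF b\<^sub>0, of x y]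
  unfolding cut_def by auto

lemma (in cyclic_order) cut_increasing:
  assumes b\<^sub>0: "b\<^sub>0 \<in> X" and X: "a \<in> X" "b \<in> X" "c \<in> X" and "cut b\<^sub>0 a b" "cut b\<^sub>0 b c"
  shows "R a b c"
proof (cases "a = b\<^sub>0")
  case True thus ?thesis using assms unfolding cut_def by auto
next
  case False
  hence "R b\<^sub>0 a b" "R b\<^sub>0 b c" using assms unfolding cut_def by auto
  hence "R b b\<^sub>0 a" "R b c b\<^sub>0" using rotate X b\<^sub>0 by blast+
  hence "R b c a" using trans X b\<^sub>0 by blast
  thus ?thesis using rotate X by blast
qed

lemma (in cyclic_order) realisation:
  assumes fin: "finite X"
  obtains r where "bij_betw r X {..<card X}"
    "\<And>a b c. \<lbrakk>a \<in> X; b \<in> X; c \<in> X\<rbrakk> \<Longrightarrow> cyc (r a) (r b) (r c) \<longleftrightarrow> R a b c"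
proof (cases "X = {}")
  case True
  thus ?thesis using that by (simp add: bij_betw_def)
next
  case False
  then obtain b\<^sub>0 where b\<^sub>0: "b\<^sub>0 \<in> X" by blast
  obtain r where bij: "bij_betw r X {..<card X}"
    and cut_iff: "\<And>x y. \<lbrakk>x \<in> X; y \<in> X\<rbrakk> \<Longrightarrow> cut b\<^sub>0 x y \<longleftrightarrow> r x < r y"
    by (rule finite_linear_order_ranking[of X "cut b\<^sub>0"]) (use fin cut_linear_order[OF b\<^sub>0] in blast)+
  have "inj_on r X" using bij by (simp add: bij_betw_def)
  moreover have "R a b c" if "a \<in> X" "b \<in> X" "c \<in> X" "r a < r b" "r b < r c" for a b c
    using cut_increasing[OF b\<^sub>0] cut_iff that by blast
  ultimately show ?thesis using that bij realises_if_increasing by blast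
qed

section \<open>Necklaces as cyclic orders on beads\<close>

lemma small_symmetric_length:
  assumes "small_symmetric V w" "finite V"
  shows "length w = 2 * card V"
proof -
  have "set w \<subseteq> V" and fibre: "\<And>v. v \<in> V \<Longrightarrow> card {i. i < length w \<and> w ! i = v} = 2"
    using assms(1) unfolding small_symmetric_def by auto
  hence "{..<length w} = (\<Union>v\<in>V. {i. i < length w \<and> w ! i = v})"
    using nth_mem by fastforce
  hence "length w = card (\<Union>v\<in>V. {i. i < length w \<and> w ! i = v})" by (metis card_lessThan)
  also have "\<dots> = (\<Sum>v\<in>V. card {i. i < length w \<and> w ! i = v})"
    by (rule card_UN_disjoint) (use assms in auto)
  also have "\<dots> = 2 * card V" using fibre by simp
  finally show ?thesis .
qed

definition beads :: "'v set \<Rightarrow> ('v \<times> nat) set" where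
  "beads V = V \<times> {0, 1}"

definition opposite :: "'v \<times> nat \<Rightarrow> 'v \<times> nat" where
  "opposite x = (fst x, 1 - snd x)"

text \<open>The two beads of each colour cut the cyclic order into two arcs, each containing exactly
  one bead of every other colour.\<close>
definition antipodal :: "'v set \<Rightarrow> ('v \<times> nat \<Rightarrow> 'v \<times> nat \<Rightarrow> 'v \<times> nat \<Rightarrow> bool) \<Rightarrow> bool" where
  "antipodal V R \<longleftrightarrow> (\<forall>x\<in>beads V. \<forall>u\<in>V. u \<noteq> fst x \<longrightarrow>
     (R x (u, 0) (opposite x) \<longleftrightarrow> \<not> R x (u, 1) (opposite x)))"

lemma beadsE:
  assumes "x \<in> beads V"
  obtains v e where "x = (v, e)" "v \<in> V" "e < 2"
  using assms unfolding beads_def by force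

lemma beads_fst: "x \<in> beads V \<Longrightarrow> fst x \<in> V"
  unfolding beads_def by auto

lemma beads_mono: "\<tau> \<subseteq> \<sigma> \<Longrightarrow> beads \<tau> \<subseteq> beads \<sigma>"
  unfolding beads_def by auto

lemma beads_restrict: "x \<in> beads \<sigma> \<Longrightarrow> fst x \<in> \<tau> \<Longrightarrow> x \<in> beads \<tau>"
  unfolding beads_def by auto

lemma finite_beads: "finite V \<Longrightarrow> finite (beads V)"
  unfolding beads_def by simp

lemma card_beads: "finite V \<Longrightarrow> card (beads V) = 2 * card V"
  unfolding beads_def by (simp add: card_cartesian_product)

lemma opposite_beads:
  assumes "x \<in> beads V"
  shows "opposite x \<in> beads V" "opposite (opposite x) = x" "opposite x \<noteq> x" "fst (opposite x) = fst x"
  using assms unfolding opposite_def beads_def by auto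

lemma card_arc_to_opposite:
  assumes fin: "finite V" and R: "cyclic_order (beads V) R" and anti: "antipodal V R"
    and x: "x \<in> beads V"
  shows "card {y \<in> beads V. R x y (opposite x)} = card V - 1"
proof -
  obtain v e where ve: "x = (v, e)" "v \<in> V" "e < 2" using x by (rule beadsE)
  define pick where "pick u = (u, if R x (u, 0) (opposite x) then 0 else 1::nat)" for u
  have "{y \<in> beads V. R x y (opposite x)} = pick ` (V - {v})"
  proof (intro equalityI subsetI)
    fix y assume y: "y \<in> {y \<in> beads V. R x y (opposite x)}"
    then obtain u k where uk: "y = (u, k)" "u \<in> V" "k < 2" by (auto elim: beadsE)
    have "u \<noteq> v"
    proof
      assume "u = v"
      hence "y = x \<or> y = opposite x" using uk ve unfolding opposite_def by auto
      thus False using cyclic_order.distinct[OF R x, of y "opposite x"] y opposite_beads[OF x] by auto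
    qed
    moreover have "y = pick u"
      using y uk anti x ve \<open>u \<noteq> v\<close> unfolding pick_def antipodal_def by (auto simp: less_2_cases_iff)
    ultimately show "y \<in> pick ` (V - {v})" using uk by auto
  next
    fix y assume "y \<in> pick ` (V - {v})"
    then obtain u where "u \<in> V" "u \<noteq> v" "y = pick u" by auto
    thus "y \<in> {y \<in> beads V. R x y (opposite x)}"
      using anti x ve unfolding pick_def antipodal_def beads_def by auto
  qed
  moreover have "inj_on pick (V - {v})" unfolding pick_def by (auto intro: inj_onI)
  ultimately show ?thesis using fin ve by (simp add: card_image card_Diff_singleton)
qed

lemma realisation_opposite:
  assumes fin: "finite V" and R: "cyclic_order (beads V) R" and anti: "antipodal V R"
    and r: "bij_betw r (beads V) {..<2 * card V}"
    and realises: "\<And>a b c. \<lbrakk>a \<in> beads V; b \<in> beads V; c \<in> beads V\<rbrakk> \<Longrightarrow>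
      cyc (r a) (r b) (r c) \<longleftrightarrow> R a b c"
    and x: "x \<in> beads V"
  shows "r (opposite x) = (r x + card V) mod (2 * card V)"
proof -
  let ?n = "card V"
  have r_lt: "r y < 2 * ?n" if "y \<in> beads V" for y
    using r that unfolding bij_betw_def by auto
  have r_onto: "\<exists>y\<in>beads V. j = r y" if "j < 2 * ?n" for j
    using r that unfolding bij_betw_def by auto
  have inj: "inj_on r (beads V)" using r unfolding bij_betw_def by blast
  txt \<open>The arc strictly between \<open>y\<close> and its twin holds one bead of each of the other
    \<open>n - 1\<close> colours.\<close>
  have forward: "r (opposite y) = r y + ?n" if y: "y \<in> beads V" and lt: "r y < r (opposite y)" for y
  proof -
    note oy = opposite_beads[OF y]
    have "r ` {z \<in> beads V. R y z (opposite y)} = {r y<..<r (opposite y)}"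
    proof (intro equalityI subsetI)
      fix j assume "j \<in> r ` {z \<in> beads V. R y z (opposite y)}"
      then obtain z where "z \<in> beads V" "R y z (opposite y)" "j = r z" by blast
      thus "j \<in> {r y<..<r (opposite y)}" using realises[OF y _ oy(1)] cyc_iff_between[OF lt] by auto
    next
      fix j assume j: "j \<in> {r y<..<r (opposite y)}"
      hence "j < 2 * ?n" using r_lt[OF oy(1)] by simp
      then obtain z where "z \<in> beads V" "j = r z" using r_onto by blast
      thus "j \<in> r ` {z \<in> beads V. R y z (opposite y)}"
        using realises[OF y _ oy(1)] cyc_iff_between[OF lt] j by auto
    qed
    hence "card {r y<..<r (opposite y)} = ?n - 1"
      using card_arc_to_opposite[OF fin R anti y] inj_on_subset[OF inj]
      by (metis (no_types, lifting) card_image mem_Collect_eq subsetI)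
    moreover have "?n \<ge> 1" using fin y by (auto simp: Suc_le_eq card_gt_0_iff beads_def)
    ultimately show ?thesis using lt by simp
  qed
  note ox = opposite_beads[OF x]
  have "r (opposite x) \<noteq> r x" using inj x ox by (metis inj_onD)
  then consider "r x < r (opposite x)" | "r (opposite x) < r x" by linarith
  thus ?thesis
  proof cases
    case 1 thus ?thesis using forward[OF x] r_lt[OF ox(1)] by simp
  next
    case 2
    hence "r x = r (opposite x) + ?n" using forward[OF ox(1)] ox(2) by simp
    thus ?thesis using r_lt[OF ox(1)] by (simp add: mult_2 add.assoc)
  qed
qed

definition bead_labelling ::
  "'v set \<Rightarrow> 'v list \<Rightarrow> ('v \<times> nat \<Rightarrow> nat) \<Rightarrow> ('v \<times> nat \<Rightarrow> 'v \<times> nat \<Rightarrow> 'v \<times> nat \<Rightarrow> bool) \<Rightarrow> bool"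
where
  "bead_labelling V w g R \<longleftrightarrow> small_symmetric V w \<and> bij_betw g (beads V) {..<length w} \<and>
     (\<forall>x\<in>beads V. w ! g x = fst x) \<and>
     (\<forall>a\<in>beads V. \<forall>b\<in>beads V. \<forall>c\<in>beads V. cyc (g a) (g b) (g c) \<longleftrightarrow> R a b c)"

lemma small_symmetric_if_opposite_half_turn:
  assumes r: "bij_betw r (beads V) {..<length w}"
    and colour: "\<And>x. x \<in> beads V \<Longrightarrow> w ! r x = fst x"
    and half_turn: "\<And>x. x \<in> beads V \<Longrightarrow> r (opposite x) = (r x + card V) mod length w"
    and len: "length w = 2 * card V"
  shows "small_symmetric V w"
proof -
  have inj: "inj_on r (beads V)" and img: "r ` beads V = {..<length w}"
    using r unfolding bij_betw_def by auto
  have "set w \<subseteq> V"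
  proof
    fix v assume "v \<in> set w"
    then obtain i where "i < length w" "v = w ! i" by (auto simp: in_set_conv_nth)
    then obtain x where "x \<in> beads V" "v = w ! r x" using img by (metis imageE lessThan_iff)
    thus "v \<in> V" using colour by (simp add: beads_fst)
  qed
  moreover have "card {i. i < length w \<and> w ! i = v} = 2" if v: "v \<in> V" for v
  proof -
    have "{i. i < length w \<and> w ! i = v} = r ` {(v, 0), (v, 1)}"
    proof (intro equalityI subsetI)
      fix i assume "i \<in> {i. i < length w \<and> w ! i = v}"
      hence "i \<in> r ` beads V" "w ! i = v" using img by auto
      then obtain x where "x \<in> beads V" "i = r x" "w ! i = v" by blast
      thus "i \<in> r ` {(v, 0), (v, 1)}" using colour by (auto elim!: beadsE simp: less_2_cases_iff)
    next
      fix i assume "i \<in> r ` {(v, 0), (v, 1)}"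
      thus "i \<in> {i. i < length w \<and> w ! i = v}" using img colour v by (auto simp: beads_def)
    qed
    moreover have "inj_on r {(v, 0), (v, 1)}"
      by (rule inj_on_subset[OF inj]) (use v in \<open>auto simp: beads_def\<close>)
    ultimately show ?thesis by (simp add: card_image)
  qed
  moreover have "rotate (card V) w ! i = w ! i" if "i < length w" for i
  proof -
    have "i \<in> r ` beads V" using img that by simp
    then obtain x where x: "x \<in> beads V" "i = r x" by blast
    have "rotate (card V) w ! i = w ! ((card V + i) mod length w)" using nth_rotate that by metis
    also have "\<dots> = w ! r (opposite x)" using half_turn x by (simp add: add.commute)
    finally show ?thesis using colour opposite_beads[OF x(1)] x by simp
  qed
  hence "rotate (length w div 2) w = w" using len by (intro nth_equalityI) simp_all
  ultimately show ?thesis unfolding small_symmetric_def by blast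
qed

lemma bead_labelling_exists:
  assumes fin: "finite V" and R: "cyclic_order (beads V) R" and anti: "antipodal V R"
  shows "\<exists>w g. bead_labelling V w g R"
proof -
  let ?n = "card V"
  obtain r where r: "bij_betw r (beads V) {..<2 * ?n}"
    and realises: "\<And>a b c. \<lbrakk>a \<in> beads V; b \<in> beads V; c \<in> beads V\<rbrakk> \<Longrightarrow>
      cyc (r a) (r b) (r c) \<longleftrightarrow> R a b c"
    using cyclic_order.realisation[OF R finite_beads[OF fin]] card_beads[OF fin] by metis
  define w where "w = map (\<lambda>i. fst (inv_into (beads V) r i)) [0..<2 * ?n]"
  have len: "length w = 2 * ?n" unfolding w_def by simp
  have colour: "w ! r x = fst x" if "x \<in> beads V" for x
  proof -
    have "r x < 2 * ?n" using r that unfolding bij_betw_def by blast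
    thus ?thesis using inv_into_f_f[OF bij_betw_imp_inj_on[OF r] that] unfolding w_def by simp
  qed
  have "small_symmetric V w"
    using small_symmetric_if_opposite_half_turn[of r V w] r colour len
      realisation_opposite[OF fin R anti r realises] by simp
  hence "bead_labelling V w r R"
    unfolding bead_labelling_def using r len colour realises by simp
  thus ?thesis by blast
qed

lemma bead_labelling_small_symmetric: "bead_labelling V w g R \<Longrightarrow> small_symmetric V w"
  unfolding bead_labelling_def by blast

lemma bead_labelling_colour: "bead_labelling V w g R \<Longrightarrow> x \<in> beads V \<Longrightarrow> w ! g x = fst x"
  unfolding bead_labelling_def by blast

lemma bead_labelling_cyc:
  "bead_labelling V w g R \<Longrightarrow> a \<in> beads V \<Longrightarrow> b \<in> beads V \<Longrightarrow> c \<in> beads V \<Longrightarrow>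
    cyc (g a) (g b) (g c) \<longleftrightarrow> R a b c"
  unfolding bead_labelling_def by blast

lemma bead_labelling_inj: "bead_labelling V w g R \<Longrightarrow> inj_on g (beads V)"
  by (simp add: bead_labelling_def bij_betw_def)

lemma bead_labelling_image: "bead_labelling V w g R \<Longrightarrow> g ` beads V = {..<length w}"
  by (simp add: bead_labelling_def bij_betw_def)

lemma bead_labelling_less: "bead_labelling V w g R \<Longrightarrow> x \<in> beads V \<Longrightarrow> g x < length w"
  using bead_labelling_image by fastforce

lemma bead_labelling_onto:
  assumes "bead_labelling V w g R" "i < length w"
  obtains x where "x \<in> beads V" "i = g x"
proof -
  have "i \<in> g ` beads V" using bead_labelling_image[OF assms(1)] assms(2) by simp
  thus ?thesis using that by blast
qed

lemma cyc_antipodal_square: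
  assumes "p < 4" "(q::nat) < 4" "q \<noteq> p" "q \<noteq> (p + 2) mod 4"
  shows "cyc p q ((p + 2) mod 4) \<longleftrightarrow> \<not> cyc p ((q + 2) mod 4) ((p + 2) mod 4)"
proof -
  have "p = 0 \<or> p = 1 \<or> p = 2 \<or> p = 3" "q = 0 \<or> q = 1 \<or> q = 2 \<or> q = 3" using assms by arith+
  thus ?thesis using assms by (elim disjE) (simp_all add: cyc_def)
qed

lemma edge_labelling_length: "bead_labelling {u, v} w g R \<Longrightarrow> u \<noteq> v \<Longrightarrow> length w = 4"
  using small_symmetric_length[OF bead_labelling_small_symmetric] by fastforce

lemma edge_labelling_opposite:
  assumes g: "bead_labelling {u, v} w g R" and "u \<noteq> v" and z: "z \<in> beads {u, v}"
  shows "g (opposite z) = (g z + 2) mod 4"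
proof -
  have len: "length w = 4" using edge_labelling_length[OF g \<open>u \<noteq> v\<close>] .
  hence "rotate 2 w = w"
    using bead_labelling_small_symmetric[OF g] unfolding small_symmetric_def by simp
  hence half_turn: "w ! ((i + 2) mod 4) = w ! i" if "i < 4" for i
    using nth_rotate[of i w 2] that len by (simp add: add.commute)
  have fibre: "j = g (c, 0) \<or> j = g (c, 1)" if j: "j < 4" "w ! j = c" for j c
  proof -
    obtain y where y: "y \<in> beads {u, v}" "j = g y"
      by (rule bead_labelling_onto[OF g]) (use j len in auto)
    hence "fst y = c" using bead_labelling_colour[OF g] j by metis
    thus ?thesis using y by (auto elim: beadsE simp: less_2_cases_iff)
  qed
  obtain c k where ck: "z = (c, k)" "k < 2" using z by (rule beadsE)
  have lt: "g z < 4" using bead_labelling_less[OF g z] len by simp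
  hence "w ! ((g z + 2) mod 4) = c" using half_turn bead_labelling_colour[OF g z] ck by simp
  hence "(g z + 2) mod 4 = g (c, 0) \<or> (g z + 2) mod 4 = g (c, 1)" using fibre by simp
  moreover have "(g z + 2) mod 4 \<noteq> g z" using lt by presburger
  ultimately have "(g z + 2) mod 4 = g (c, 1 - k)" using ck by (auto simp: less_2_cases_iff)
  thus ?thesis using ck by (simp add: opposite_def)
qed

lemma antipodal_edge:
  assumes g: "bead_labelling {u, v} w g R"
  shows "antipodal {u, v} R"
  unfolding antipodal_def
proof (intro ballI impI)
  fix x y assume x: "x \<in> beads {u, v}" and y: "y \<in> {u, v}" and xy: "y \<noteq> fst x"
  have "u \<noteq> v" using x y xy by (auto simp: beads_def)
  note len = edge_labelling_length[OF g this] and opposite_pos = edge_labelling_opposite[OF g this]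
  have yb: "(y, 0) \<in> beads {u, v}" "(y, 1) \<in> beads {u, v}" using y by (auto simp: beads_def)
  have "(y, 1) = opposite (y, 0)" by (simp add: opposite_def)
  hence pos1: "g (y, 1) = (g (y, 0) + 2) mod 4" using opposite_pos[OF yb(1)] by simp
  have "g (y, 0) \<noteq> g x" "g (y, 0) \<noteq> g (opposite x)"
    using bead_labelling_colour[OF g] yb x opposite_beads[OF x] xy by (metis fst_conv)+
  moreover have "g x < 4" "g (y, 0) < 4" using bead_labelling_less[OF g] x yb len by auto
  ultimately have "cyc (g x) (g (y, 0)) (g (opposite x)) \<longleftrightarrow> \<not> cyc (g x) (g (y, 1)) (g (opposite x))"
    using cyc_antipodal_square[of "g x" "g (y, 0)"] opposite_pos[OF x] pos1 by simp
  thus "R x (y, 0) (opposite x) \<longleftrightarrow> \<not> R x (y, 1) (opposite x)"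
    using bead_labelling_cyc[OF g] x yb opposite_beads[OF x] by metis
qed

section \<open>Morphisms and consistent collections\<close>

lemma necklace_morphism_inj: "necklace_morphism \<tau> u w f \<Longrightarrow> inj_on f {..<length u}"
  unfolding necklace_morphism_def by blast

lemma necklace_morphism_image:
  "necklace_morphism \<tau> u w f \<Longrightarrow> f ` {..<length u} = {j. j < length w \<and> w ! j \<in> \<tau>}"
  unfolding necklace_morphism_def by blast

lemma necklace_morphism_colour: "necklace_morphism \<tau> u w f \<Longrightarrow> i < length u \<Longrightarrow> w ! f i = u ! i"
  unfolding necklace_morphism_def by blast

lemma necklace_morphism_cyc:
  "\<lbrakk>necklace_morphism \<tau> u w f; i < length u; j < length u; k < length u; cyc i j k\<rbrakk> \<Longrightarrow>
    cyc (f i) (f j) (f k)"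
  unfolding necklace_morphism_def by blast

lemma necklace_morphism_cyc_iff:
  assumes f: "necklace_morphism \<tau> u w f" and ijk: "i < length u" "j < length u" "k < length u"
  shows "cyc (f i) (f j) (f k) \<longleftrightarrow> cyc i j k"
proof
  assume c: "cyc (f i) (f j) (f k)"
  have "\<not> cyc (f i) (f k) (f j)" using cyc_asym[OF c] .
  hence "\<not> cyc i k j" using necklace_morphism_cyc[OF f ijk(1,3,2)] by blast
  moreover have "i \<noteq> j" "j \<noteq> k" "i \<noteq> k" using cyc_distinct[OF c] by auto
  ultimately show "cyc i j k" using cyc_total by blast
next
  assume "cyc i j k"
  thus "cyc (f i) (f j) (f k)" using necklace_morphism_cyc[OF f ijk] by blast
qed

lemma bead_labelling_image_face:
  assumes w: "bead_labelling \<sigma> w h R" and ts: "\<tau> \<subseteq> \<sigma>"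
  shows "h ` beads \<tau> = {j. j < length w \<and> w ! j \<in> \<tau>}"
proof (intro equalityI subsetI)
  fix j assume "j \<in> h ` beads \<tau>"
  then obtain x where "x \<in> beads \<tau>" "j = h x" by blast
  thus "j \<in> {j. j < length w \<and> w ! j \<in> \<tau>}"
    using beads_mono[OF ts] bead_labelling_less[OF w] bead_labelling_colour[OF w] by (auto simp: beads_def)
next
  fix j assume "j \<in> {j. j < length w \<and> w ! j \<in> \<tau>}"
  hence j: "j < length w" "w ! j \<in> \<tau>" by auto
  obtain y where "y \<in> beads \<sigma>" "j = h y" using j(1) by (rule bead_labelling_onto[OF w])
  moreover have "fst y \<in> \<tau>" using j calculation bead_labelling_colour[OF w] by simp
  ultimately show "j \<in> h ` beads \<tau>" using beads_restrict by blast
qed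

lemma necklace_morphism_of_labellings:
  assumes u: "bead_labelling \<tau> u g R" and w: "bead_labelling \<sigma> w h R'" and ts: "\<tau> \<subseteq> \<sigma>"
    and R: "\<And>a b c. \<lbrakk>a \<in> beads \<tau>; b \<in> beads \<tau>; c \<in> beads \<tau>\<rbrakk> \<Longrightarrow> R a b c \<longleftrightarrow> R' a b c"
    and f: "\<And>x. x \<in> beads \<tau> \<Longrightarrow> f (g x) = h x"
  shows "necklace_morphism \<tau> u w f"
  unfolding necklace_morphism_def
proof (intro conjI allI impI)
  have img_u: "{..<length u} = g ` beads \<tau>" using bead_labelling_image[OF u] by simp
  show "inj_on f {..<length u}"
  proof (rule inj_onI)
    fix i j assume "i \<in> {..<length u}" "j \<in> {..<length u}" and eq: "f i = f j"
    then obtain x y where xy: "x \<in> beads \<tau>" "y \<in> beads \<tau>" "i = g x" "j = g y" using img_u by auto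
    hence "h x = h y" using eq f by simp
    hence "x = y" using inj_onD[OF bead_labelling_inj[OF w]] xy beads_mono[OF ts] by blast
    thus "i = j" using xy by simp
  qed
  have "f ` {..<length u} = h ` beads \<tau>" unfolding img_u image_image using f by simp
  also have "\<dots> = {j. j < length w \<and> w ! j \<in> \<tau>}" using bead_labelling_image_face[OF w ts] .
  finally show "f ` {..<length u} = {j. j < length w \<and> w ! j \<in> \<tau>}" .
next
  fix i assume "i < length u"
  then obtain x where "x \<in> beads \<tau>" "i = g x" by (rule bead_labelling_onto[OF u])
  moreover have "x \<in> beads \<sigma>" using calculation(1) beads_mono[OF ts] by blast
  ultimately show "w ! f i = u ! i"
    using f bead_labelling_colour[OF u] bead_labelling_colour[OF w] by simp
next
  fix i j k assume "i < length u" "j < length u" "k < length u" and c: "cyc i j k"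
  then obtain x y z where xyz: "x \<in> beads \<tau>" "y \<in> beads \<tau>" "z \<in> beads \<tau>" "i = g x" "j = g y" "k = g z"
    by (metis bead_labelling_onto[OF u])
  hence "R' x y z" using c R bead_labelling_cyc[OF u] by blast
  hence "cyc (h x) (h y) (h z)" using bead_labelling_cyc[OF w] xyz beads_mono[OF ts] by blast
  thus "cyc (f i) (f j) (f k)" using xyz f by simp
qed

lemma necklace_iso_of_morphism:
  assumes "necklace_morphism \<sigma> u w f" "set w \<subseteq> \<sigma>"
  shows "necklace_iso u w f"
proof -
  have "{j. j < length w \<and> w ! j \<in> \<sigma>} = {j. j < length w \<and> w ! j \<in> set w}"
    using assms(2) by auto
  thus ?thesis using assms(1) unfolding necklace_iso_def necklace_morphism_def by simp
qed

lemma consistent_collection_of_labellings: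
  assumes lab: "\<And>\<sigma>. \<sigma> \<in> T \<Longrightarrow> bead_labelling \<sigma> (N \<sigma>) (g \<sigma>) R"
    and comp: "\<And>\<sigma> \<tau> x. \<lbrakk>\<sigma> \<in> T; \<tau> \<in> T; \<tau> \<subset> \<sigma>; x \<in> beads \<tau>\<rbrakk> \<Longrightarrow> F \<tau> \<sigma> (g \<tau> x) = g \<sigma> x"
  shows "consistent_collection T N F"
  unfolding consistent_collection_def
proof (intro conjI ballI impI allI)
  fix \<sigma> assume "\<sigma> \<in> T"
  thus "small_symmetric \<sigma> (N \<sigma>)" using lab bead_labelling_small_symmetric by blast
next
  fix \<sigma> \<tau> assume "\<sigma> \<in> T" "\<tau> \<in> T" "\<tau> \<subset> \<sigma>"
  thus "necklace_morphism \<tau> (N \<tau>) (N \<sigma>) (F \<tau> \<sigma>)"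
    using necklace_morphism_of_labellings[OF lab lab] comp by blast
next
  fix \<rho> \<tau> \<sigma> i assume "\<rho> \<in> T" "\<tau> \<in> T" "\<sigma> \<in> T" and "\<rho> \<subset> \<tau> \<and> \<tau> \<subset> \<sigma>" and "i < length (N \<rho>)"
  moreover from this obtain x where "x \<in> beads \<rho>" "i = g \<rho> x" using bead_labelling_onto[OF lab] by metis
  moreover have "x \<in> beads \<tau>" using calculation beads_mono by blast
  ultimately show "F \<tau> \<sigma> (F \<rho> \<tau> i) = F \<rho> \<sigma> i" using comp by (metis psubset_trans)
qed

lemma iso_rel_of_labellings:
  assumes lab1: "\<And>\<sigma>. \<sigma> \<in> T \<Longrightarrow> bead_labelling \<sigma> (N1 \<sigma>) (g1 \<sigma>) R1"
    and lab2: "\<And>\<sigma>. \<sigma> \<in> T \<Longrightarrow> bead_labelling \<sigma> (N2 \<sigma>) (g2 \<sigma>) R2"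
    and R: "\<And>\<sigma> a b c. \<lbrakk>\<sigma> \<in> T; a \<in> beads \<sigma>; b \<in> beads \<sigma>; c \<in> beads \<sigma>\<rbrakk> \<Longrightarrow> R1 a b c \<longleftrightarrow> R2 a b c"
    and comp1: "\<And>\<sigma> \<tau> x. \<lbrakk>\<sigma> \<in> T; \<tau> \<in> T; \<tau> \<subset> \<sigma>; x \<in> beads \<tau>\<rbrakk> \<Longrightarrow> F1 \<tau> \<sigma> (g1 \<tau> x) = g1 \<sigma> x"
    and comp2: "\<And>\<sigma> \<tau> x. \<lbrakk>\<sigma> \<in> T; \<tau> \<in> T; \<tau> \<subset> \<sigma>; x \<in> beads \<tau>\<rbrakk> \<Longrightarrow> F2 \<tau> \<sigma> (g2 \<tau> x) = g2 \<sigma> x"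
    and "S \<subseteq> T" and agree: "\<And>\<sigma> x. \<lbrakk>\<sigma> \<in> S; x \<in> beads \<sigma>\<rbrakk> \<Longrightarrow> g1 \<sigma> x = g2 \<sigma> x"
  shows "iso_rel S T N1 F1 N2 F2"
proof -
  define \<phi> where "\<phi> \<sigma> = g2 \<sigma> \<circ> inv_into (beads \<sigma>) (g1 \<sigma>)" for \<sigma>
  have \<phi>: "\<phi> \<sigma> (g1 \<sigma> x) = g2 \<sigma> x" if "\<sigma> \<in> T" "x \<in> beads \<sigma>" for \<sigma> x
    unfolding \<phi>_def using inv_into_f_f[OF bead_labelling_inj[OF lab1[OF that(1)]] that(2)] by simp
  show ?thesis unfolding iso_rel_def
  proof (intro exI[of _ \<phi>] conjI ballI allI impI)
    fix \<sigma> assume s: "\<sigma> \<in> T"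
    have "necklace_morphism \<sigma> (N1 \<sigma>) (N2 \<sigma>) (\<phi> \<sigma>)"
      by (rule necklace_morphism_of_labellings[OF lab1[OF s] lab2[OF s] order_refl]) (use R s \<phi> in auto)
    thus "necklace_iso (N1 \<sigma>) (N2 \<sigma>) (\<phi> \<sigma>)"
      using necklace_iso_of_morphism bead_labelling_small_symmetric[OF lab2[OF s]]
      unfolding small_symmetric_def by blast
  next
    fix \<sigma> i assume s: "\<sigma> \<in> S" and "i < length (N1 \<sigma>)"
    moreover have sT: "\<sigma> \<in> T" using s \<open>S \<subseteq> T\<close> by blast
    ultimately obtain x where "x \<in> beads \<sigma>" "i = g1 \<sigma> x" using bead_labelling_onto[OF lab1] by metis
    thus "\<phi> \<sigma> i = i" using \<phi>[OF sT] agree[OF s] by simp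
  next
    fix \<sigma> \<tau> i assume s: "\<sigma> \<in> T" and t: "\<tau> \<in> T" and ts: "\<tau> \<subset> \<sigma>" and "i < length (N1 \<tau>)"
    then obtain x where x: "x \<in> beads \<tau>" "i = g1 \<tau> x" using bead_labelling_onto[OF lab1[OF t]] by metis
    moreover have "x \<in> beads \<sigma>" using x beads_mono ts by blast
    ultimately show "\<phi> \<sigma> (F1 \<tau> \<sigma> i) = F2 \<tau> \<sigma> (\<phi> \<tau> i)"
      using comp1[OF s t ts] comp2[OF s t ts] \<phi>[OF s] \<phi>[OF t] by simp
  qed
qed

text \<open>The bead \<open>(v, e)\<close> of \<open>\<sigma>\<close> is the image in \<open>N \<sigma>\<close> of bead \<open>e\<close> of the necklace over the
  vertex \<open>v\<close>; over a vertex itself there is no morphism and \<open>e\<close> is used directly.\<close>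
definition bead_position :: "('v set \<Rightarrow> 'v set \<Rightarrow> nat \<Rightarrow> nat) \<Rightarrow> 'v set \<Rightarrow> 'v \<times> nat \<Rightarrow> nat" where
  "bead_position F \<sigma> x = (if card \<sigma> = 1 then snd x else F {fst x} \<sigma> (snd x))"

definition bead_cyc ::
  "('v set \<Rightarrow> 'v set \<Rightarrow> nat \<Rightarrow> nat) \<Rightarrow> 'v \<times> nat \<Rightarrow> 'v \<times> nat \<Rightarrow> 'v \<times> nat \<Rightarrow> bool" where
  "bead_cyc F a b c = (let \<tau> = {fst a, fst b, fst c} in
     cyc (bead_position F \<tau> a) (bead_position F \<tau> b) (bead_position F \<tau> c))"

locale necklace_collection =
  fixes T :: "'v set set" and N :: "'v set \<Rightarrow> 'v list" and F :: "'v set \<Rightarrow> 'v set \<Rightarrow> nat \<Rightarrow> nat"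
  assumes finite_simplex: "\<sigma> \<in> T \<Longrightarrow> finite \<sigma>"
    and face_closed: "\<lbrakk>\<sigma> \<in> T; \<tau> \<subseteq> \<sigma>; \<tau> \<noteq> {}\<rbrakk> \<Longrightarrow> \<tau> \<in> T"
    and consistent: "consistent_collection T N F"
begin

lemma necklace_small_symmetric: "\<sigma> \<in> T \<Longrightarrow> small_symmetric \<sigma> (N \<sigma>)"
  using consistent unfolding consistent_collection_def by simp

lemma face_morphism: "\<lbrakk>\<sigma> \<in> T; \<tau> \<in> T; \<tau> \<subset> \<sigma>\<rbrakk> \<Longrightarrow> necklace_morphism \<tau> (N \<tau>) (N \<sigma>) (F \<tau> \<sigma>)"
  using consistent unfolding consistent_collection_def by simp

lemma face_morphism_comp:
  "\<lbrakk>\<rho> \<in> T; \<tau> \<in> T; \<sigma> \<in> T; \<rho> \<subset> \<tau>; \<tau> \<subset> \<sigma>; i < length (N \<rho>)\<rbrakk> \<Longrightarrow> F \<tau> \<sigma> (F \<rho> \<tau> i) = F \<rho> \<sigma> i"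
  using consistent unfolding consistent_collection_def by simp

lemma length_necklace: "\<sigma> \<in> T \<Longrightarrow> length (N \<sigma>) = 2 * card \<sigma>"
  using small_symmetric_length necklace_small_symmetric finite_simplex by blast

lemma vertex_necklace:
  assumes "\<sigma> \<in> T" "v \<in> \<sigma>"
  shows "{v} \<in> T" "length (N {v}) = 2" "e < 2 \<Longrightarrow> N {v} ! e = v"
proof -
  show T: "{v} \<in> T" using face_closed assms by blast
  show len: "length (N {v}) = 2" using length_necklace[OF T] by simp
  assume "e < 2"
  hence "N {v} ! e \<in> set (N {v})" using len by simp
  thus "N {v} ! e = v" using necklace_small_symmetric[OF T] unfolding small_symmetric_def by blast
qed

lemma bead_position_vertex:
  assumes "\<sigma> \<in> T" "v \<in> \<sigma>" "card \<sigma> \<noteq> 1"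
  shows "necklace_morphism {v} (N {v}) (N \<sigma>) (F {v} \<sigma>)" "bead_position F \<sigma> (v, e) = F {v} \<sigma> e"
proof -
  have "\<sigma> \<noteq> {v}" using assms(3) by auto
  hence "{v} \<subset> \<sigma>" using assms(2) by blast
  thus "necklace_morphism {v} (N {v}) (N \<sigma>) (F {v} \<sigma>)"
    using face_morphism[OF assms(1) vertex_necklace(1)[OF assms(1,2)]] by blast
  show "bead_position F \<sigma> (v, e) = F {v} \<sigma> e" using assms(3) unfolding bead_position_def by simp
qed

lemma bead_position_less_colour:
  assumes s: "\<sigma> \<in> T" and x: "x \<in> beads \<sigma>"
  shows "bead_position F \<sigma> x < length (N \<sigma>)" "N \<sigma> ! bead_position F \<sigma> x = fst x"
proof -
  obtain v e where ve: "x = (v, e)" "v \<in> \<sigma>" "e < 2" using x by (rule beadsE)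
  have "bead_position F \<sigma> (v, e) < length (N \<sigma>) \<and> N \<sigma> ! bead_position F \<sigma> (v, e) = v"
  proof (cases "card \<sigma> = 1")
    case True
    hence "\<sigma> = {v}" using ve(2) by (metis One_nat_def card_1_singleton_iff singletonD)
    thus ?thesis using True ve vertex_necklace[OF s ve(2)] unfolding bead_position_def by simp
  next
    case False
    note M = bead_position_vertex[OF s ve(2) False]
    have e: "e < length (N {v})" using vertex_necklace(2)[OF s ve(2)] ve(3) by simp
    hence "F {v} \<sigma> e \<in> F {v} \<sigma> ` {..<length (N {v})}" by blast
    hence "F {v} \<sigma> e < length (N \<sigma>)" unfolding necklace_morphism_image[OF M(1)] by blast
    moreover have "N \<sigma> ! F {v} \<sigma> e = v"
      using necklace_morphism_colour[OF M(1) e] vertex_necklace(3)[OF s ve(2,3)] by simp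
    ultimately show ?thesis using M(2) by simp
  qed
  thus "bead_position F \<sigma> x < length (N \<sigma>)" "N \<sigma> ! bead_position F \<sigma> x = fst x"
    using ve(1) by simp_all
qed

lemma bead_position_inj:
  assumes s: "\<sigma> \<in> T"
  shows "inj_on (bead_position F \<sigma>) (beads \<sigma>)"
proof (rule inj_onI)
  fix x y assume x: "x \<in> beads \<sigma>" and y: "y \<in> beads \<sigma>"
    and eq: "bead_position F \<sigma> x = bead_position F \<sigma> y"
  obtain v e where xe: "x = (v, e)" "v \<in> \<sigma>" "e < 2" using x by (rule beadsE)
  obtain v' e' where ye: "y = (v', e')" "e' < 2" using y by (rule beadsE)
  have "v = v'" using bead_position_less_colour(2)[OF s x] bead_position_less_colour(2)[OF s y] eq xe ye
    by simp
  moreover have "e = e'"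
  proof (cases "card \<sigma> = 1")
    case True thus ?thesis using eq xe ye unfolding bead_position_def by simp
  next
    case False
    note M = bead_position_vertex[OF s xe(2) False]
    have "F {v} \<sigma> e = F {v} \<sigma> e'" using eq xe ye M(2) \<open>v = v'\<close> by simp
    thus "e = e'"
      using inj_onD[OF necklace_morphism_inj[OF M(1)]] xe(3) ye(2) vertex_necklace(2)[OF s xe(2)] by simp
  qed
  ultimately show "x = y" using xe ye by simp
qed

lemma bead_position_image:
  assumes s: "\<sigma> \<in> T"
  shows "bead_position F \<sigma> ` beads \<sigma> = {..<length (N \<sigma>)}"
proof (intro equalityI subsetI)
  fix j assume "j \<in> bead_position F \<sigma> ` beads \<sigma>"
  thus "j \<in> {..<length (N \<sigma>)}" using bead_position_less_colour(1)[OF s] by auto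
next
  fix j assume j: "j \<in> {..<length (N \<sigma>)}"
  define v where "v = N \<sigma> ! j"
  have v: "v \<in> \<sigma>" using j necklace_small_symmetric[OF s] unfolding v_def small_symmetric_def by auto
  have "\<exists>e<2. j = bead_position F \<sigma> (v, e)"
  proof (cases "card \<sigma> = 1")
    case True
    hence "\<sigma> = {v}" using v by (metis One_nat_def card_1_singleton_iff singletonD)
    thus ?thesis using True j vertex_necklace(2)[OF s v] unfolding bead_position_def by auto
  next
    case False
    note M = bead_position_vertex[OF s v False]
    have "j \<in> F {v} \<sigma> ` {..<length (N {v})}"
      using j unfolding necklace_morphism_image[OF M(1)] by (simp add: v_def)
    thus ?thesis using M(2) vertex_necklace(2)[OF s v] by auto
  qed
  thus "j \<in> bead_position F \<sigma> ` beads \<sigma>" using v by (auto simp: beads_def)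
qed

lemma bead_position_bij: "\<sigma> \<in> T \<Longrightarrow> bij_betw (bead_position F \<sigma>) (beads \<sigma>) {..<length (N \<sigma>)}"
  unfolding bij_betw_def using bead_position_inj bead_position_image by blast

lemma bead_position_morphism:
  assumes s: "\<sigma> \<in> T" and t: "\<tau> \<in> T" and ts: "\<tau> \<subset> \<sigma>" and x: "x \<in> beads \<tau>"
  shows "F \<tau> \<sigma> (bead_position F \<tau> x) = bead_position F \<sigma> x"
proof -
  obtain v e where ve: "x = (v, e)" "v \<in> \<tau>" "e < 2" using x by (rule beadsE)
  have "card \<tau> < card \<sigma>" using psubset_card_mono[OF finite_simplex[OF s] ts] .
  moreover have "card \<tau> \<ge> 1" using ve finite_simplex[OF t] by (auto simp: Suc_le_eq card_gt_0_iff)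
  ultimately have s1: "card \<sigma> \<noteq> 1" by simp
  show ?thesis
  proof (cases "card \<tau> = 1")
    case True
    hence "\<tau> = {v}" using ve by (auto simp: card_Suc_eq)
    thus ?thesis using True s1 ve unfolding bead_position_def by simp
  next
    case False
    hence "{v} \<subset> \<tau>" using ve by auto
    hence "F \<tau> \<sigma> (F {v} \<tau> e) = F {v} \<sigma> e"
      using face_morphism_comp vertex_necklace[OF t ve(2)] t s ts ve by simp
    thus ?thesis using False s1 ve unfolding bead_position_def by simp
  qed
qed

lemma cyc_bead_position:
  assumes s: "\<sigma> \<in> T" and abc: "a \<in> beads \<sigma>" "b \<in> beads \<sigma>" "c \<in> beads \<sigma>"
  shows "cyc (bead_position F \<sigma> a) (bead_position F \<sigma> b) (bead_position F \<sigma> c) \<longleftrightarrow> bead_cyc F a b c"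
proof -
  define \<tau> where "\<tau> = {fst a, fst b, fst c}"
  have "\<tau> \<subseteq> \<sigma>" using abc unfolding \<tau>_def beads_def by auto
  hence t: "\<tau> \<in> T" using face_closed[OF s] unfolding \<tau>_def by blast
  have R: "bead_cyc F a b c \<longleftrightarrow> cyc (bead_position F \<tau> a) (bead_position F \<tau> b) (bead_position F \<tau> c)"
    unfolding bead_cyc_def \<tau>_def Let_def ..
  show ?thesis
  proof (cases "\<tau> = \<sigma>")
    case True thus ?thesis using R by simp
  next
    case False
    hence ts: "\<tau> \<subset> \<sigma>" using \<open>\<tau> \<subseteq> \<sigma>\<close> by auto
    have abc': "a \<in> beads \<tau>" "b \<in> beads \<tau>" "c \<in> beads \<tau>"
      using abc unfolding \<tau>_def beads_def by auto
    have lt: "bead_position F \<tau> y < length (N \<tau>)" if "y \<in> beads \<tau>" for y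
      using bead_position_less_colour(1)[OF t that] .
    show ?thesis
      using R bead_position_morphism[OF s t ts] abc'
        necklace_morphism_cyc_iff[OF face_morphism[OF s t ts] lt lt lt] by metis
  qed
qed

lemma bead_labelling_necklace: "\<sigma> \<in> T \<Longrightarrow> bead_labelling \<sigma> (N \<sigma>) (bead_position F \<sigma>) (bead_cyc F)"
  unfolding bead_labelling_def
  using necklace_small_symmetric bead_position_bij bead_position_less_colour(2) cyc_bead_position by blast

lemma cyclic_order_bead_cyc:
  assumes small_faces: "\<And>\<tau>. \<lbrakk>\<tau> \<subseteq> \<sigma>; \<tau> \<noteq> {}; card \<tau> \<le> 4\<rbrakk> \<Longrightarrow> \<tau> \<in> T"
  shows "cyclic_order (beads \<sigma>) (bead_cyc F)"
proof -
  have face: "\<exists>\<tau>\<in>T. a \<in> beads \<tau> \<and> b \<in> beads \<tau> \<and> c \<in> beads \<tau> \<and> d \<in> beads \<tau>"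
    if "a \<in> beads \<sigma>" "b \<in> beads \<sigma>" "c \<in> beads \<sigma>" "d \<in> beads \<sigma>" for a b c d
  proof
    let ?\<tau> = "{fst a, fst b, fst c, fst d}"
    have "?\<tau> \<subseteq> \<sigma>" using that by (simp add: beads_fst)
    moreover have "card ?\<tau> \<le> 4" using card_length[of "[fst a, fst b, fst c, fst d]"] by simp
    ultimately show "?\<tau> \<in> T" by (simp add: small_faces)
    show "a \<in> beads ?\<tau> \<and> b \<in> beads ?\<tau> \<and> c \<in> beads ?\<tau> \<and> d \<in> beads ?\<tau>"
      using that by (simp add: beads_restrict)
  qed
  show ?thesis
  proof
    fix a b c assume "a \<in> beads \<sigma>" "b \<in> beads \<sigma>" "c \<in> beads \<sigma>"
    then obtain \<tau> where "\<tau> \<in> T" "a \<in> beads \<tau>" "b \<in> beads \<tau>" "c \<in> beads \<tau>" using face by blast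
    note abc = \<open>a \<in> beads \<tau>\<close> \<open>b \<in> beads \<tau>\<close> \<open>c \<in> beads \<tau>\<close>
    note cyc_pos = cyc_bead_position[OF \<open>\<tau> \<in> T\<close>]
    show "bead_cyc F a b c \<Longrightarrow> bead_cyc F b c a"
      using cyc_pos[OF abc] cyc_pos[OF abc(2,3,1)] cyc_rotate by blast
    show "bead_cyc F a b c \<Longrightarrow> \<not> bead_cyc F a c b"
      using cyc_pos[OF abc] cyc_pos[OF abc(1,3,2)] cyc_asym by blast
    show "bead_cyc F a b c \<Longrightarrow> a \<noteq> b \<and> b \<noteq> c \<and> a \<noteq> c"
      using cyc_pos[OF abc] cyc_distinct by blast
    show "bead_cyc F a b c \<or> bead_cyc F a c b" if "a \<noteq> b" "b \<noteq> c" "a \<noteq> c"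
    proof -
      have "inj_on (bead_position F \<tau>) (beads \<tau>)" using bead_position_inj[OF \<open>\<tau> \<in> T\<close>] .
      hence "bead_position F \<tau> a \<noteq> bead_position F \<tau> b" "bead_position F \<tau> b \<noteq> bead_position F \<tau> c"
        "bead_position F \<tau> a \<noteq> bead_position F \<tau> c"
        using that abc by (auto dest: inj_onD)
      thus ?thesis using cyc_pos[OF abc] cyc_pos[OF abc(1,3,2)] cyc_total by blast
    qed
  next
    fix a b c d assume "a \<in> beads \<sigma>" "b \<in> beads \<sigma>" "c \<in> beads \<sigma>" "d \<in> beads \<sigma>"
    then obtain \<tau> where "\<tau> \<in> T" and abcd: "a \<in> beads \<tau>" "b \<in> beads \<tau>" "c \<in> beads \<tau>" "d \<in> beads \<tau>"
      using face by blast
    note cyc_pos = cyc_bead_position[OF \<open>\<tau> \<in> T\<close>]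
    show "bead_cyc F a b c \<Longrightarrow> bead_cyc F a c d \<Longrightarrow> bead_cyc F a b d"
      using cyc_pos[OF abcd(1,2,3)] cyc_pos[OF abcd(1,3,4)] cyc_pos[OF abcd(1,2,4)] cyc_trans by blast
  qed
qed

lemma antipodal_bead_cyc:
  assumes edges: "\<And>\<tau>. \<lbrakk>\<tau> \<subseteq> \<sigma>; \<tau> \<noteq> {}; card \<tau> \<le> 2\<rbrakk> \<Longrightarrow> \<tau> \<in> T"
  shows "antipodal \<sigma> (bead_cyc F)"
  unfolding antipodal_def
proof (intro ballI impI)
  fix x u assume x: "x \<in> beads \<sigma>" and u: "u \<in> \<sigma>" "u \<noteq> fst x"
  let ?\<tau> = "{u, fst x}"
  have "?\<tau> \<subseteq> \<sigma>" using x u by (simp add: beads_fst)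
  moreover have "card ?\<tau> \<le> 2" using card_length[of "[u, fst x]"] by simp
  ultimately have "?\<tau> \<in> T" by (simp add: edges)
  hence "antipodal ?\<tau> (bead_cyc F)" using antipodal_edge[OF bead_labelling_necklace] by blast
  moreover have "x \<in> beads ?\<tau>" using x by (simp add: beads_restrict)
  ultimately show "bead_cyc F x (u, 0) (opposite x) \<longleftrightarrow> \<not> bead_cyc F x (u, 1) (opposite x)"
    using u unfolding antipodal_def by blast
qed

lemma extension_exists:
  assumes finite_B: "\<And>\<sigma>. \<sigma> \<in> B \<Longrightarrow> finite \<sigma>"
    and small_faces: "\<And>\<sigma> \<tau>. \<lbrakk>\<sigma> \<in> B; \<tau> \<subseteq> \<sigma>; \<tau> \<noteq> {}; card \<tau> \<le> 4\<rbrakk> \<Longrightarrow> \<tau> \<in> T"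
  shows "\<exists>N' F'. consistent_collection B N' F' \<and> extends_collection T N F N' F'"
proof -
  have "\<forall>\<sigma>\<in>B. \<exists>w g. bead_labelling \<sigma> w g (bead_cyc F)"
  proof
    fix \<sigma> assume s: "\<sigma> \<in> B"
    have "cyclic_order (beads \<sigma>) (bead_cyc F)" by (rule cyclic_order_bead_cyc) (use s small_faces in auto)
    moreover have "antipodal \<sigma> (bead_cyc F)" by (rule antipodal_bead_cyc) (use s small_faces in auto)
    ultimately show "\<exists>w g. bead_labelling \<sigma> w g (bead_cyc F)"
      using bead_labelling_exists finite_B[OF s] by blast
  qed
  from bchoice[OF this] obtain W where "\<forall>\<sigma>\<in>B. \<exists>g. bead_labelling \<sigma> (W \<sigma>) g (bead_cyc F)" ..
  from bchoice[OF this] obtain G where WG: "\<forall>\<sigma>\<in>B. bead_labelling \<sigma> (W \<sigma>) (G \<sigma>) (bead_cyc F)" ..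
  define N' where "N' \<sigma> = (if \<sigma> \<in> T then N \<sigma> else W \<sigma>)" for \<sigma>
  define g where "g \<sigma> = (if \<sigma> \<in> T then bead_position F \<sigma> else G \<sigma>)" for \<sigma>
  define F' where "F' \<tau> \<sigma> = (if \<sigma> \<in> T then F \<tau> \<sigma> else g \<sigma> \<circ> inv_into (beads \<tau>) (g \<tau>))" for \<tau> \<sigma>
  have lab: "bead_labelling \<sigma> (N' \<sigma>) (g \<sigma>) (bead_cyc F)" if "\<sigma> \<in> B" for \<sigma>
    using bead_labelling_necklace WG that unfolding N'_def g_def by simp
  have comp: "F' \<tau> \<sigma> (g \<tau> x) = g \<sigma> x" if "\<sigma> \<in> B" "\<tau> \<in> B" "\<tau> \<subset> \<sigma>" "x \<in> beads \<tau>" for \<sigma> \<tau> x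
  proof (cases "\<sigma> \<in> T")
    case True
    have "\<tau> \<noteq> {}" using that(4) by (auto simp: beads_def)
    hence "\<tau> \<in> T" using face_closed[OF True] that(3) by blast
    thus ?thesis using bead_position_morphism[OF True _ that(3,4)] True unfolding F'_def g_def by simp
  next
    case False
    thus ?thesis using inv_into_f_f[OF bead_labelling_inj[OF lab[OF that(2)]] that(4)]
      unfolding F'_def by simp
  qed
  have "consistent_collection B N' F'" using consistent_collection_of_labellings[OF lab comp] .
  moreover have "extends_collection T N F N' F'" unfolding extends_collection_def N'_def F'_def by simp
  ultimately show ?thesis by blast
qed

lemma bead_position_extends:
  assumes ext: "extends_collection T N F N' F'" and s: "\<sigma> \<in> T" and x: "x \<in> beads \<sigma>"
  shows "bead_position F' \<sigma> x = bead_position F \<sigma> x"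
proof (cases "card \<sigma> = 1")
  case True thus ?thesis unfolding bead_position_def by simp
next
  case False
  obtain v e where ve: "x = (v, e)" "v \<in> \<sigma>" "e < 2" using x by (rule beadsE)
  have "\<sigma> \<noteq> {v}" using False by auto
  hence "{v} \<subset> \<sigma>" using ve by blast
  moreover have "{v} \<in> T" "e < length (N {v})" using vertex_necklace[OF s ve(2)] ve(3) by auto
  ultimately have "F' {v} \<sigma> e = F {v} \<sigma> e" using ext s unfolding extends_collection_def by blast
  thus ?thesis using False ve unfolding bead_position_def by simp
qed

lemma extension_unique:
  assumes B1: "necklace_collection B N1 F1" and B2: "necklace_collection B N2 F2" and "T \<subseteq> B"
    and small_faces: "\<And>\<sigma> \<tau>. \<lbrakk>\<sigma> \<in> B; \<tau> \<subseteq> \<sigma>; \<tau> \<noteq> {}; card \<tau> \<le> 3\<rbrakk> \<Longrightarrow> \<tau> \<in> T"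
    and ext1: "extends_collection T N F N1 F1" and ext2: "extends_collection T N F N2 F2"
  shows "iso_rel T B N1 F1 N2 F2"
proof -
  have cyc_eq: "bead_cyc F' a b c \<longleftrightarrow> bead_cyc F a b c"
    if ext: "extends_collection T N F N' F'" and s: "\<sigma> \<in> B"
      and abc: "a \<in> beads \<sigma>" "b \<in> beads \<sigma>" "c \<in> beads \<sigma>" for N' F' \<sigma> a b c
  proof -
    let ?\<tau> = "{fst a, fst b, fst c}"
    have "?\<tau> \<subseteq> \<sigma>" using abc by (simp add: beads_fst)
    moreover have "card ?\<tau> \<le> 3" using card_length[of "[fst a, fst b, fst c]"] by simp
    ultimately have "?\<tau> \<in> T" using small_faces[OF s] by simp
    moreover have "a \<in> beads ?\<tau>" "b \<in> beads ?\<tau>" "c \<in> beads ?\<tau>" using abc by (simp_all add: beads_restrict)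
    ultimately show ?thesis unfolding bead_cyc_def Let_def using bead_position_extends[OF ext] by simp
  qed
  interpret B1: necklace_collection B N1 F1 by (fact B1)
  interpret B2: necklace_collection B N2 F2 by (fact B2)
  show ?thesis
  proof (rule iso_rel_of_labellings)
    show "bead_labelling \<sigma> (N1 \<sigma>) (bead_position F1 \<sigma>) (bead_cyc F1)" if "\<sigma> \<in> B" for \<sigma>
      using B1.bead_labelling_necklace[OF that] .
    show "bead_labelling \<sigma> (N2 \<sigma>) (bead_position F2 \<sigma>) (bead_cyc F2)" if "\<sigma> \<in> B" for \<sigma>
      using B2.bead_labelling_necklace[OF that] .
    show "bead_cyc F1 a b c \<longleftrightarrow> bead_cyc F2 a b c"
      if "\<sigma> \<in> B" "a \<in> beads \<sigma>" "b \<in> beads \<sigma>" "c \<in> beads \<sigma>" for \<sigma> a b c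
      using cyc_eq[OF ext1 that] cyc_eq[OF ext2 that] by simp
    show "F1 \<tau> \<sigma> (bead_position F1 \<tau> x) = bead_position F1 \<sigma> x"
      if "\<sigma> \<in> B" "\<tau> \<in> B" "\<tau> \<subset> \<sigma>" "x \<in> beads \<tau>" for \<sigma> \<tau> x
      using B1.bead_position_morphism[OF that] .
    show "F2 \<tau> \<sigma> (bead_position F2 \<tau> x) = bead_position F2 \<sigma> x"
      if "\<sigma> \<in> B" "\<tau> \<in> B" "\<tau> \<subset> \<sigma>" "x \<in> beads \<tau>" for \<sigma> \<tau> x
      using B2.bead_position_morphism[OF that] .
    show "T \<subseteq> B" by fact
    show "bead_position F1 \<sigma> x = bead_position F2 \<sigma> x" if "\<sigma> \<in> T" "x \<in> beads \<sigma>" for \<sigma> x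
      using bead_position_extends[OF ext1 that] bead_position_extends[OF ext2 that] by simp
  qed
qed

end

theorem mainTheorem12:
  fixes B :: "'v set set"
    and N :: "'v set \<Rightarrow> 'v list"
    and F :: "'v set \<Rightarrow> 'v set \<Rightarrow> nat \<Rightarrow> nat"
  assumes "simplicial_complex B"
    and "consistent_collection (skeleton 3 B) N F"
  shows "(\<exists>N' F'. consistent_collection B N' F' \<and> extends_collection (skeleton 3 B) N F N' F')
       \<and> (\<forall>N1 F1 N2 F2.
            consistent_collection B N1 F1 \<and> extends_collection (skeleton 3 B) N F N1 F1 \<and>
            consistent_collection B N2 F2 \<and> extends_collection (skeleton 3 B) N F N2 F2
            \<longrightarrow> iso_rel (skeleton 3 B) B N1 F1 N2 F2)"
proof -
  let ?S = "skeleton 3 B"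
  have finite_B: "\<And>\<sigma>. \<sigma> \<in> B \<Longrightarrow> finite \<sigma>"
    and closed_B: "\<And>\<sigma> \<tau>. \<lbrakk>\<sigma> \<in> B; \<tau> \<subseteq> \<sigma>; \<tau> \<noteq> {}\<rbrakk> \<Longrightarrow> \<tau> \<in> B"
    using assms(1) unfolding simplicial_complex_def by blast+
  have small_faces: "\<tau> \<in> ?S" if "\<sigma> \<in> B" "\<tau> \<subseteq> \<sigma>" "\<tau> \<noteq> {}" "card \<tau> \<le> 4" for \<sigma> \<tau>
    using closed_B[OF that(1-3)] that(4) unfolding skeleton_def by simp
  have B: "necklace_collection B N' F'" if "consistent_collection B N' F'" for N' F'
    using finite_B closed_B that by unfold_locales
  interpret S: necklace_collection ?S N F
  proof
    show "finite \<sigma>" if "\<sigma> \<in> ?S" for \<sigma> using that finite_B unfolding skeleton_def by simp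
    show "\<tau> \<in> ?S" if "\<sigma> \<in> ?S" "\<tau> \<subseteq> \<sigma>" "\<tau> \<noteq> {}" for \<sigma> \<tau>
      using that small_faces card_mono[OF finite_B, of \<sigma> \<tau>] unfolding skeleton_def by force
  qed (fact assms(2))
  have "?S \<subseteq> B" unfolding skeleton_def by blast
  have "\<exists>N' F'. consistent_collection B N' F' \<and> extends_collection ?S N F N' F'"
    by (rule S.extension_exists[OF finite_B small_faces])
  moreover have "iso_rel ?S B N1 F1 N2 F2"
    if "consistent_collection B N1 F1" "extends_collection ?S N F N1 F1"
      "consistent_collection B N2 F2" "extends_collection ?S N F N2 F2" for N1 F1 N2 F2
    by (rule S.extension_unique[OF B B \<open>?S \<subseteq> B\<close>]) (use that small_faces in auto)
  ultimately show ?thesis by blast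
qed

end
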